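(* Let $\mathcal{T}=(Q,E,I,F,f)$ be a transducer that does not satisfy the weak twinning property. Then there exist states $q_1,q_2$, words $u,v\in\Sigma^*$ and $u_1,u_2,v_1,v_2\in\Gamma^*$ with runs $q_1\xrightarrow{u\mid u_1}q_1\xrightarrow{v\mid v_1}q_1\xrightarrow{u\mid u_2}q_2\xrightarrow{v\mid v_2}q_2$ such that for every $n\in\mathbb{N}$, $|\Delta(u_1v_1^n,u_2v_2^n)|\ge n$.
   Context: A transducer has finite state set $Q$, initial states $I$, final states $F$, transitions $E\subseteq Q\times\Sigma\times\Gamma^*\times Q$ and final output $f:F\to\Gamma^*$. We write $p\xrightarrow{u\mid w}q$ if there is a run from $p$ to $q$ reading $u$ and outputting $w$. $\Delta(v,w)=v^{-1}w$ is computed in the free group over $\Gamma$, and $|\cdot|$ of a free-group element is the length of its reduced word over $\Gamma\cup\Gamma^{-1}$. The transducer satisfies the weak twinning property if for all states $q_1,q_2$, all $u,v\in\Sigma^*$ and $u_1,u_2,v_1,v_2\in\Gamma^*$ with $q_1\xrightarrow{u\mid u_1}q_1$, $q_1\xrightarrow{v\mid v_1}q_1$, $q_1\xrightarrow{u\mid u_2}q_2$, $q_2\xrightarrow{v\mid v_2}q_2$, one has $\Delta(u_1,u_2)=\Delta(u_1v_1,u_2v_2)$. *)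

theory Defs
  imports Main
begin

record ('q, 'a, 'b) transducer =
  states :: "'q set"
  init   :: "'q set"
  final  :: "'q set"
  trans  :: "('q \<times> 'a \<times> 'b list \<times> 'q) set"
  fout   :: "'q \<Rightarrow> 'b list"

definition wf_transducer :: "('q, 'a, 'b) transducer \<Rightarrow> bool" where
  "wf_transducer T \<longleftrightarrow> finite (states T) \<and> finite (trans T) \<and>
     init T \<subseteq> states T \<and> final T \<subseteq> states T \<and>
     (\<forall>(p, a, w, q) \<in> trans T. p \<in> states T \<and> q \<in> states T)"

inductive run :: "('q, 'a, 'b) transducer \<Rightarrow> 'q \<Rightarrow> 'a list \<Rightarrow> 'b list \<Rightarrow> 'q \<Rightarrow> bool"
  for T where
  run_nil: "run T p [] [] p"
| run_step: "(p, a, x, p') \<in> trans T \<Longrightarrow> run T p' u w q \<Longrightarrow> run T p (a # u) (x @ w) q"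

text \<open>Free group over 'b: letters (True, g) = g, (False, g) = g^{-1};
  elements are represented by freely reduced words.\<close>
type_synonym 'b fg_word = "(bool \<times> 'b) list"

definition inv_letter :: "bool \<times> 'b \<Rightarrow> bool \<times> 'b" where
  "inv_letter x = (\<not> fst x, snd x)"

definition fg_reduce :: "'b fg_word \<Rightarrow> 'b fg_word" where
  "fg_reduce xs = foldr (\<lambda>x acc. case acc of [] \<Rightarrow> [x]
       | y # ys \<Rightarrow> (if y = inv_letter x then ys else x # acc)) xs []"

definition fg_of :: "'b list \<Rightarrow> 'b fg_word" where
  "fg_of w = map (\<lambda>g. (True, g)) w"

definition fg_inv :: "'b fg_word \<Rightarrow> 'b fg_word" where
  "fg_inv xs = rev (map inv_letter xs)"

definition Delta :: "'b list \<Rightarrow> 'b list \<Rightarrow> 'b fg_word" where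
  "Delta v w = fg_reduce (fg_inv (fg_of v) @ fg_of w)"

definition fg_norm :: "'b fg_word \<Rightarrow> nat" where
  "fg_norm x = length (fg_reduce x)"

definition weak_twinning :: "('q, 'a, 'b) transducer \<Rightarrow> bool" where
  "weak_twinning T \<longleftrightarrow>
    (\<forall>q1\<in>states T. \<forall>q2\<in>states T. \<forall>u v u1 u2 v1 v2.
       run T q1 u u1 q1 \<longrightarrow> run T q1 v v1 q1 \<longrightarrow>
       run T q1 u u2 q2 \<longrightarrow> run T q2 v v2 q2 \<longrightarrow>
       Delta u1 u2 = Delta (u1 @ v1) (u2 @ v2))"

end

theory Submission
  imports Defs "HOL-Library.Sublist"
begin

text \<open>For words \<open>x, y\<close> over \<open>\<Gamma>\<close> the reduced form of \<open>x\<^sup>-\<^sup>1y\<close> is obtained by cancelling their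
  longest common prefix, so \<open>|\<Delta>(x, y)| = |x| + |y| - 2 |lcp(x, y)|\<close>. Take a witness of the
  failure of weak twinning and pump the loops. If \<open>|v\<^sub>1| \<noteq> |v\<^sub>2|\<close>, the lengths of
  \<open>u\<^sub>1v\<^sub>1\<^sup>N\<close> and \<open>u\<^sub>2v\<^sub>2\<^sup>N\<close> drift apart linearly in \<open>N\<close>. If \<open>|v\<^sub>1| = |v\<^sub>2|\<close>, their common
  prefix stays shorter than \<open>max |u\<^sub>i| + |v\<^sub>1|\<close>: a longer one would make, say, \<open>u\<^sub>2 = u\<^sub>1w\<close>
  with \<open>v\<^sub>1w = wv\<^sub>2\<close>, and then \<open>\<Delta>(u\<^sub>1v\<^sub>1, u\<^sub>2v\<^sub>2) = \<Delta>(u\<^sub>1, u\<^sub>2)\<close>. Either way \<open>|\<Delta>|\<close> grows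
  at least like \<open>N - C\<close>, and replacing the loop \<open>v\<close> by \<open>v\<^sup>k\<close> for large \<open>k\<close> absorbs \<open>C\<close>.\<close>

definition fg_cons :: "bool \<times> 'b \<Rightarrow> 'b fg_word \<Rightarrow> 'b fg_word" where
  "fg_cons x ys = (case ys of [] \<Rightarrow> [x] | y # ys' \<Rightarrow> (if y = inv_letter x then ys' else x # ys))"

lemma fg_reduce_append: "fg_reduce (xs @ ys) = foldr fg_cons xs (fg_reduce ys)"
  by (simp add: fg_reduce_def fg_cons_def [abs_def])

lemma fg_reduce_fg_of [simp]: "fg_reduce (fg_of w) = fg_of w"
proof (induction w)
  case (Cons a w)
  have "fg_reduce (fg_of (a # w)) = fg_cons (True, a) (fg_of w)"
    using fg_reduce_append [of "[(True, a)]" "fg_of w"] Cons.IH by (simp add: fg_of_def)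
  then show ?case
    by (cases w) (simp_all add: fg_cons_def fg_of_def inv_letter_def)
qed (simp add: fg_reduce_def fg_of_def)

lemma fg_inv_fg_of: "fg_inv (fg_of w) = rev (map (Pair False) w)"
  by (simp add: fg_inv_def fg_of_def inv_letter_def)

lemma Delta_eq_foldr: "Delta x y = foldr fg_cons (rev (map (Pair False) x)) (fg_of y)"
  by (simp add: Delta_def fg_reduce_append fg_inv_fg_of)

lemma foldr_fg_cons_cancel: "foldr fg_cons (rev (map (Pair False) p)) (fg_of (p @ y)) = fg_of y"
  by (induction p) (simp_all add: fg_of_def fg_cons_def inv_letter_def)

lemma foldr_fg_cons_negative:
  assumes "ws = [] \<or> \<not> fst (hd ws)"
  shows "foldr fg_cons (rev (map (Pair False) x)) ws = map (Pair False) (rev x) @ ws"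
  using assms
proof (induction x arbitrary: ws)
  case (Cons a x)
  then have "fg_cons (False, a) ws = (False, a) # ws"
    by (cases ws) (auto simp: fg_cons_def inv_letter_def)
  then show ?case
    using Cons.IH [of "(False, a) # ws"] by simp
qed simp

lemma Delta_append_same [simp]: "Delta (p @ x) (p @ y) = Delta x y"
  by (simp add: Delta_eq_foldr foldr_fg_cons_cancel)

lemma Delta_self_append [simp]: "Delta p (p @ y) = Delta [] y"
  using Delta_append_same [of p "[]" y] by simp

lemma Delta_append_self [simp]: "Delta (p @ x) p = Delta x []"
  using Delta_append_same [of p x "[]"] by simp

lemma Delta_distinct_heads:
  assumes "x = [] \<or> y = [] \<or> hd x \<noteq> hd y"
  shows "Delta x y = fg_inv (fg_of x) @ fg_of y"
proof (cases x)
  case Nil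
  then show ?thesis
    by (simp add: Delta_eq_foldr fg_inv_def fg_of_def)
next
  case (Cons a x')
  with assms have "fg_cons (False, a) (fg_of y) = (False, a) # fg_of y"
    by (cases y) (auto simp: fg_cons_def fg_of_def inv_letter_def)
  with Cons show ?thesis
    using foldr_fg_cons_negative [of "(False, a) # fg_of y" x']
    by (simp add: Delta_eq_foldr fg_inv_fg_of rev_map)
qed

lemma longest_common_prefix_split:
  "\<exists>x' y'. x = longest_common_prefix x y @ x' \<and> y = longest_common_prefix x y @ y' \<and>
     (x' = [] \<or> y' = [] \<or> hd x' \<noteq> hd y')"
proof (induction x y rule: longest_common_prefix.induct)
  case (1 a x b y)
  then show ?case
    by (cases "a = b") auto
qed auto

lemma fg_norm_Delta:
  "fg_norm (Delta x y) = length x + length y - 2 * length (longest_common_prefix x y)"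
proof -
  define c where "c = longest_common_prefix x y"
  obtain x' y' where x: "x = c @ x'" and y: "y = c @ y'"
    and heads: "x' = [] \<or> y' = [] \<or> hd x' \<noteq> hd y'"
    unfolding c_def using longest_common_prefix_split by blast
  have reduced: "Delta x y = fg_inv (fg_of x') @ fg_of y'"
    using Delta_distinct_heads [OF heads] by (simp add: x y)
  have "fg_reduce (Delta x y) = Delta x' y'"
    by (simp only: reduced) (simp only: Delta_def)
  then have "fg_norm (Delta x y) = length (Delta x' y')"
    by (simp add: fg_norm_def)
  also have "\<dots> = length x' + length y'"
    by (simp add: Delta_distinct_heads [OF heads] fg_inv_def fg_of_def)
  also have "\<dots> = length x + length y - 2 * length c"
    by (simp add: x y)
  finally show ?thesis
    by (simp only: c_def)
qed

lemma length_concat_replicate [simp]: "length (concat (replicate n v)) = n * length v"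
  by (induction n) simp_all

lemma concat_replicate_mult: "concat (replicate (m * n) v) = concat (replicate m (concat (replicate n v)))"
  by (induction m) (simp_all add: replicate_add)

lemma concat_replicate_Suc_append: "concat (replicate (Suc n) v) = concat (replicate n v) @ v"
proof -
  have "concat (replicate n v) @ v = concat (replicate n v @ [v])"
    by simp
  then show ?thesis
    by (simp only: replicate_append_same) simp
qed

lemma run_append: "run T p u w q \<Longrightarrow> run T q u' w' r \<Longrightarrow> run T p (u @ u') (w @ w') r"
  by (induction rule: run.induct) (auto intro: run.intros)

lemma run_concat_replicate:
  "run T q v w q \<Longrightarrow> run T q (concat (replicate n v)) (concat (replicate n w)) q"
  by (induction n) (auto intro: run.intros run_append)

lemma prefix_power_conjugate:
  assumes len: "length v' = length v" and pref: "prefix (w @ v') (concat (replicate N v))"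
  shows "v @ w = w @ v'"
proof (cases "v = []")
  case True
  with len show ?thesis by simp
next
  case False
  obtain zs where V: "concat (replicate N v) = w @ v' @ zs"
    using pref by (auto simp: prefix_def)
  then have "length (concat (replicate N v)) = length (w @ v' @ zs)"
    by (simp only:)
  then have "length w + length v \<le> N * length v"
    using len by simp
  with False obtain M where N: "N = Suc M" and short: "length w \<le> M * length v"
    by (cases N) auto
  let ?P = "concat (replicate M v)"
  have "take (length w + length v) (concat (replicate N v)) = w @ v'"
    using V len by simp
  then have "w @ v' = v @ take (length w) ?P"
    using N by simp
  moreover have "take (length w) (concat (replicate N v)) = w"
    using V by simp
  then have "w = take (length w) (?P @ v)"
    unfolding N concat_replicate_Suc_append by simp
  then have "w = take (length w) ?P"
    using short by simp
  ultimately show ?thesis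
    by simp
qed

lemma prefix_pumped_conjugate:
  assumes len: "length v2 = length v1" and short: "length u1 \<le> length u2"
    and pref: "prefix (u2 @ v2) (u1 @ concat (replicate N v1))"
  obtains w where "u2 = u1 @ w" "v1 @ w = w @ v2"
proof -
  have "prefix u1 u2"
    using prefix_length_prefix [of u1 "u1 @ concat (replicate N v1)" u2] append_prefixD [OF pref] short
    by simp
  then obtain w where u2: "u2 = u1 @ w"
    by (auto simp: prefix_def)
  with pref have "prefix (w @ v2) (concat (replicate N v1))"
    by simp
  with len u2 show thesis
    using prefix_power_conjugate that by blast
qed

lemma Delta_conjugate_right:
  assumes "u2 = u1 @ w" and "v1 @ w = w @ v2"
  shows "Delta (u1 @ v1) (u2 @ v2) = Delta u1 u2"
proof -
  have "Delta (u1 @ v1) (u2 @ v2) = Delta v1 (w @ v2)"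
    using assms(1) by simp
  also have "\<dots> = Delta v1 (v1 @ w)"
    by (simp only: assms(2))
  also have "\<dots> = Delta u1 u2"
    using assms(1) by simp
  finally show ?thesis .
qed

lemma Delta_conjugate_left:
  assumes "u1 = u2 @ w" and "v2 @ w = w @ v1"
  shows "Delta (u1 @ v1) (u2 @ v2) = Delta u1 u2"
proof -
  have "Delta (u1 @ v1) (u2 @ v2) = Delta (w @ v1) v2"
    using assms(1) by simp
  also have "\<dots> = Delta (v2 @ w) v2"
    by (simp only: assms(2))
  also have "\<dots> = Delta u1 u2"
    using assms(1) by simp
  finally show ?thesis .
qed

lemma longest_common_prefix_pumped_less:
  assumes len: "length v1 = length v2"
    and twist: "Delta (u1 @ v1) (u2 @ v2) \<noteq> Delta u1 u2"
  shows "length (longest_common_prefix (u1 @ concat (replicate N v1)) (u2 @ concat (replicate N v2)))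
           < max (length u1) (length u2) + length v1"
proof (rule ccontr)
  let ?x = "u1 @ concat (replicate N v1)" and ?y = "u2 @ concat (replicate N v2)"
  let ?c = "longest_common_prefix ?x ?y"
  assume "\<not> ?thesis"
  then have long: "max (length u1) (length u2) + length v1 \<le> length ?c"
    by simp
  have c_x: "prefix ?c ?x" and c_y: "prefix ?c ?y"
    by (rule longest_common_prefix_prefix1, rule longest_common_prefix_prefix2)
  from twist len have "v1 \<noteq> []"
    by auto
  moreover have "length ?c \<le> length u2 + N * length v1"
    using prefix_length_le [OF c_y] len by simp
  with long len have "length v1 \<le> N * length v1"
    using max.cobounded2 [of "length u2" "length u1"] by linarith
  ultimately obtain M where "N = Suc M"
    by (cases N) auto
  then have x1: "prefix (u1 @ v1) ?x" and y2: "prefix (u2 @ v2) ?y"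
    by simp_all
  have "length (u1 @ v1) \<le> length ?c" "length (u2 @ v2) \<le> length ?c"
    using long len max.cobounded1 [of "length u1" "length u2"] max.cobounded2 [of "length u2" "length u1"]
    by simp_all
  then have c1: "prefix (u1 @ v1) ?c" and c2: "prefix (u2 @ v2) ?c"
    using prefix_length_prefix [OF x1 c_x] prefix_length_prefix [OF y2 c_y] by simp_all
  have x_pref: "prefix (u2 @ v2) ?x"
    using c2 c_x by (rule prefix_order.trans)
  have y_pref: "prefix (u1 @ v1) ?y"
    using c1 c_y by (rule prefix_order.trans)
  show False
  proof (cases "length u1 \<le> length u2")
    case True
    obtain w where "u2 = u1 @ w" "v1 @ w = w @ v2"
      by (rule prefix_pumped_conjugate [OF len [symmetric] True x_pref])
    then have "Delta (u1 @ v1) (u2 @ v2) = Delta u1 u2"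
      by (rule Delta_conjugate_right)
    with twist show False
      by simp
  next
    case False
    then have "length u2 \<le> length u1"
      by simp
    then obtain w where "u1 = u2 @ w" "v2 @ w = w @ v1"
      by (rule prefix_pumped_conjugate [OF len _ y_pref])
    then have "Delta (u1 @ v1) (u2 @ v2) = Delta u1 u2"
      by (rule Delta_conjugate_left)
    with twist show False
      by simp
  qed
qed

lemma fg_norm_Delta_pumped_ge:
  assumes twist: "Delta (u1 @ v1) (u2 @ v2) \<noteq> Delta u1 u2"
  shows "N \<le> fg_norm (Delta (u1 @ concat (replicate N v1)) (u2 @ concat (replicate N v2)))
              + 2 * (length u1 + length u2 + length v1 + length v2)"
proof -
  let ?x = "u1 @ concat (replicate N v1)" and ?y = "u2 @ concat (replicate N v2)"
  let ?c = "longest_common_prefix ?x ?y"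
  have c_x: "length ?c \<le> length ?x" and c_y: "length ?c \<le> length ?y"
    by (rule prefix_length_le, rule longest_common_prefix_prefix1,
        rule prefix_length_le, rule longest_common_prefix_prefix2)
  then have norm: "fg_norm (Delta ?x ?y) + 2 * length ?c
                     = length u1 + length u2 + N * length v1 + N * length v2"
    by (simp add: fg_norm_Delta)
  show ?thesis
  proof (cases "length v1 = length v2")
    case True
    with twist have "v1 \<noteq> []"
      by auto
    then have "N \<le> N * length v1"
      by (cases v1) simp_all
    moreover have "length ?c < max (length u1) (length u2) + length v1"
      by (rule longest_common_prefix_pumped_less [OF True twist])
    moreover have "max (length u1) (length u2) \<le> length u1 + length u2"
      by simp
    moreover have "N * length v2 = N * length v1"
      by (simp add: True)
    ultimately show ?thesis
      using norm True unfolding distrib_left by linarith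
  next
    case False
    then consider "Suc (length v1) \<le> length v2" | "Suc (length v2) \<le> length v1"
      by linarith
    then show ?thesis
    proof cases
      case 1
      then have "N * Suc (length v1) \<le> N * length v2"
        by (rule mult_le_mono2)
      with norm c_x show ?thesis
        by simp
    next
      case 2
      then have "N * Suc (length v2) \<le> N * length v1"
        by (rule mult_le_mono2)
      with norm c_y show ?thesis
        by simp
    qed
  qed
qed

lemma fg_norm_Delta_pumped_powers_ge:
  assumes twist: "Delta (u1 @ v1) (u2 @ v2) \<noteq> Delta u1 u2"
  defines "k \<equiv> Suc (2 * (length u1 + length u2 + length v1 + length v2))"
  shows "n \<le> fg_norm (Delta (u1 @ concat (replicate n (concat (replicate k v1))))
                           (u2 @ concat (replicate n (concat (replicate k v2)))))"
proof -
  let ?C = "2 * (length u1 + length u2 + length v1 + length v2)"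
  have "n * k \<le> fg_norm (Delta (u1 @ concat (replicate (n * k) v1)) (u2 @ concat (replicate (n * k) v2))) + ?C"
    by (rule fg_norm_Delta_pumped_ge [OF twist])
  moreover have "n + ?C \<le> n * k" if "n \<noteq> 0"
    using that by (simp add: k_def)
  ultimately show ?thesis
    by (cases "n = 0") (simp_all add: concat_replicate_mult)
qed

theorem lemma8:
  fixes T :: "('q, 'a, 'b) transducer"
  assumes "wf_transducer T"
    and "\<not> weak_twinning T"
  shows "\<exists>q1\<in>states T. \<exists>q2\<in>states T. \<exists>(u::'a list) v (u1::'b list) u2 v1 v2.
           run T q1 u u1 q1 \<and> run T q1 v v1 q1 \<and>
           run T q1 u u2 q2 \<and> run T q2 v v2 q2 \<and>
           (\<forall>n::nat. fg_norm (Delta (u1 @ concat (replicate n v1))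
                                    (u2 @ concat (replicate n v2))) \<ge> n)"
proof -
  from assms(2) obtain q1 q2 u v u1 u2 v1 v2 where states: "q1 \<in> states T" "q2 \<in> states T"
    and runs: "run T q1 u u1 q1" "run T q1 v v1 q1" "run T q1 u u2 q2" "run T q2 v v2 q2"
    and twist: "Delta (u1 @ v1) (u2 @ v2) \<noteq> Delta u1 u2"
    unfolding weak_twinning_def by auto
  define k where "k = Suc (2 * (length u1 + length u2 + length v1 + length v2))"
  have "run T q1 (concat (replicate k v)) (concat (replicate k v1)) q1"
    "run T q2 (concat (replicate k v)) (concat (replicate k v2)) q2"
    by (simp_all add: run_concat_replicate runs)
  moreover have "n \<le> fg_norm (Delta (u1 @ concat (replicate n (concat (replicate k v1))))
                                  (u2 @ concat (replicate n (concat (replicate k v2)))))" for n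
    unfolding k_def by (rule fg_norm_Delta_pumped_powers_ge [OF twist])
  ultimately show ?thesis
    using states runs(1,3) by blast
qed

end
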